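(* Let $\Gamma$ be a digraph on a set $\Omega$ and let $\mathbf{a}=(\alpha_0,\alpha_1,\ldots)$ be an infinite walk in $\Gamma$ such that every vertex occurs only finitely many times in $\mathbf{a}$. Then there is a ray $\mathbf{r}$ in $\Gamma$ whose vertex sequence is a subsequence of $\mathbf{a}$ such that, for every infinite subset $\Sigma\subseteq\{\alpha_0,\alpha_1,\ldots\}$, we have both $\mathbf{r}\preccurlyeq\Sigma$ and $\Sigma\preccurlyeq\mathbf{r}$. Analogously, if $\mathbf{a}$ is an infinite anti-walk in which every vertex occurs only finitely many times, then $\mathbf{a}$ contains (as a subsequence) an anti-ray $\mathbf{r}$ with $\mathbf{r}\preccurlyeq\Sigma$ and $\Sigma\preccurlyeq\mathbf{r}$ for every infinite subset $\Sigma$ of the vertices of $\mathbf{a}$.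
   Context: A digraph on a set $\Omega$ is a subset $\Gamma\subseteq\Omega\times\Omega$; elements of $\Omega$ are vertices and elements of $\Gamma$ are edges. A walk is a finite or infinite sequence $(v_0,v_1,\ldots)$ of (not necessarily distinct) vertices with $(v_i,v_{i+1})\in\Gamma$ for all $i$; an anti-walk is such a sequence with $(v_{i+1},v_i)\in\Gamma$ for all $i$. A path is a walk consisting of pairwise distinct vertices (a single vertex is a path of length $0$). A ray is an infinite path; an anti-ray is an infinite anti-walk of pairwise distinct vertices. For infinite subsets $\Sigma',\Sigma\subseteq\Omega$ (rays and anti-rays are identified with their vertex sets), write $\Sigma'\preccurlyeq\Sigma$ if there exist infinitely many pairwise vertex-disjoint paths in $\Gamma$ (paths of length $0$ allowed), each with initial vertex in $\Sigma'$ and final vertex in $\Sigma$. *)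

theory Defs
  imports Main
begin

definition is_walk :: "('a \<times> 'a) set \<Rightarrow> (nat \<Rightarrow> 'a) \<Rightarrow> bool" where
  "is_walk \<Gamma> a \<longleftrightarrow> (\<forall>i. (a i, a (Suc i)) \<in> \<Gamma>)"

definition is_anti_walk :: "('a \<times> 'a) set \<Rightarrow> (nat \<Rightarrow> 'a) \<Rightarrow> bool" where
  "is_anti_walk \<Gamma> a \<longleftrightarrow> (\<forall>i. (a (Suc i), a i) \<in> \<Gamma>)"

definition is_ray :: "('a \<times> 'a) set \<Rightarrow> (nat \<Rightarrow> 'a) \<Rightarrow> bool" where
  "is_ray \<Gamma> r \<longleftrightarrow> is_walk \<Gamma> r \<and> inj r"

definition is_anti_ray :: "('a \<times> 'a) set \<Rightarrow> (nat \<Rightarrow> 'a) \<Rightarrow> bool" where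
  "is_anti_ray \<Gamma> r \<longleftrightarrow> is_anti_walk \<Gamma> r \<and> inj r"

definition is_path :: "('a \<times> 'a) set \<Rightarrow> 'a list \<Rightarrow> bool" where
  "is_path \<Gamma> p \<longleftrightarrow> p \<noteq> [] \<and> distinct p \<and> (\<forall>i. Suc i < length p \<longrightarrow> (p ! i, p ! Suc i) \<in> \<Gamma>)"

text \<open>\<open>S' \<preccurlyeq> S\<close>: infinitely many pairwise vertex-disjoint paths from \<open>S'\<close> to \<open>S\<close>.\<close>
definition reach_preceq :: "('a \<times> 'a) set \<Rightarrow> 'a set \<Rightarrow> 'a set \<Rightarrow> bool" where
  "reach_preceq \<Gamma> S' S \<longleftrightarrow>
     (\<exists>P. infinite P \<and> (\<forall>p\<in>P. is_path \<Gamma> p \<and> hd p \<in> S' \<and> last p \<in> S)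
          \<and> pairwise (\<lambda>p q. set p \<inter> set q = {}) P)"

end

theory Submission
  imports Defs
begin

(* Let a be an infinite walk in which every vertex occurs only finitely often.
   (1) Ray extraction: jump repeatedly to the LAST occurrence of the current vertex and then
       take one step of the walk.  The visited indices f 0 < f 1 < ... give a subsequence
       a o f that is still a walk, and it is injective because after the last occurrence
       of a vertex that vertex never reappears.
   (2) Linking: if the walk visits A infinitely often and B infinitely often, then
       A is linked to B by infinitely many disjoint paths.  Since only finitely many indices
       carry the vertices of an initial segment of a, we can choose index windows
       [I n, J n] running from a visit of A to a visit of B whose vertex sets are pairwise
       disjoint; shortcutting the cycles of each window gives a path.
   Every infinite subset of the vertices of a, and the ray from (1), is visited infinitely
   often, so (2) yields both relations of the theorem.  The anti-walk case is the walk case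
   in the converse digraph, since reversing a path of the converse gives a path of the
   digraph and so the relation is swapped. *)

section \<open>Paths inside walk segments\<close>

text \<open>Every segment of a walk from index i to index j contains a path from a i to a j
  that only uses vertices of that segment (delete the closed subwalks).\<close>

lemma walk_segment_path:
  assumes walk: "is_walk \<Gamma> a" and "i \<le> j"
  shows "\<exists>p. is_path \<Gamma> p \<and> hd p = a i \<and> last p = a j \<and> set p \<subseteq> a ` {i..j}"
  using \<open>i \<le> j\<close>
proof (induction "j - i" arbitrary: i rule: less_induct)
  case less
  show ?case
  proof (cases "a i \<in> a ` {Suc i..j}")
    case True
    text \<open>The vertex a i recurs later in the segment: restart from its later occurrence.\<close>
    then obtain i' where i': "i' \<in> {Suc i..j}" "a i' = a i" by auto
    then have "j - i' < j - i" "i' \<le> j" by auto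
    then obtain p
      where p: "is_path \<Gamma> p" "hd p = a i'" "last p = a j" "set p \<subseteq> a ` {i'..j}"
      using less.hyps by blast
    have "a ` {i'..j} \<subseteq> a ` {i..j}" using i' by (intro image_mono) auto
    with p i' show ?thesis by (intro exI[of _ p]) auto
  next
    case fresh: False
    show ?thesis
    proof (cases "i = j")
      case True
      then show ?thesis by (intro exI[of _ "[a i]"]) (simp add: is_path_def)
    next
      case False
      text \<open>The vertex a i never recurs: prepend it to a path of the shorter segment.\<close>
      with less.prems have "j - Suc i < j - i" "Suc i \<le> j" by auto
      then obtain p
        where p: "is_path \<Gamma> p" "hd p = a (Suc i)" "last p = a j" "set p \<subseteq> a ` {Suc i..j}"
        using less.hyps by blast
      have p_ne: "p \<noteq> []" using p(1) by (simp add: is_path_def)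
      have edge: "(a i, hd p) \<in> \<Gamma>" using walk p(2) by (simp add: is_walk_def)
      have "is_path \<Gamma> (a i # p)"
        unfolding is_path_def
      proof (intro conjI allI impI)
        show "distinct (a i # p)" using fresh p(1,4) by (auto simp: is_path_def)
        fix k assume "Suc k < length (a i # p)"
        then show "((a i # p) ! k, (a i # p) ! Suc k) \<in> \<Gamma>"
          using edge p(1) p_ne by (cases k) (auto simp: is_path_def hd_conv_nth)
      qed simp
      moreover have "set (a i # p) \<subseteq> a ` {i..j}" using p(4) less.prems by auto
      ultimately show ?thesis using p(3) p_ne by (intro exI[of _ "a i # p"]) simp
    qed
  qed
qed

section \<open>Walks with finitely many repetitions\<close>

lemma walk_eventually_leaves_prefix:
  assumes fin: "\<forall>v. finite {i. a i = v}"
  shows "\<forall>\<^sub>F k in sequentially. a k \<notin> a ` {..x}"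
proof -
  have "{k. a k \<in> a ` {..x}} = (\<Union>v\<in>a ` {..x}. {k. a k = v})" by auto
  also have "finite \<dots>" using fin by auto
  finally show ?thesis by (simp add: cofinite_eq_sequentially[symmetric] eventually_cofinite)
qed

lemma frequently_visits_infinite_subset:
  assumes "S \<subseteq> range a" and "infinite S"
  shows "\<exists>\<^sub>F i in sequentially. a i \<in> S"
proof -
  have "S \<subseteq> a ` {i. a i \<in> S}" using assms(1) by auto
  then have "infinite {i. a i \<in> S}" using assms(2) finite_surj by blast
  then show ?thesis by (simp add: cofinite_eq_sequentially[symmetric] frequently_cofinite)
qed

text \<open>If A and B are both visited infinitely often, there are infinitely many index windows,
  each starting at a visit of A and ending at a visit of B, with pairwise disjoint vertex
  sets: each window is chosen beyond the point after which the walk never returns to the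
  vertices seen up to the end of the previous window.\<close>

lemma walk_disjoint_windows:
  fixes a :: "nat \<Rightarrow> 'a"
  assumes fin: "\<forall>v. finite {i. a i = v}"
    and A: "\<exists>\<^sub>F i in sequentially. a i \<in> A" and B: "\<exists>\<^sub>F j in sequentially. a j \<in> B"
  obtains I J :: "nat \<Rightarrow> nat"
  where "\<And>n. I n \<le> J n" "\<And>n. a (I n) \<in> A" "\<And>n. a (J n) \<in> B"
    and "\<And>m n. m \<noteq> n \<Longrightarrow> a ` {I m..J m} \<inter> a ` {I n..J n} = {}"
proof -
  obtain leave :: "nat \<Rightarrow> nat" where leave: "\<And>x k. k \<ge> leave x \<Longrightarrow> a k \<notin> a ` {..x}"
    using walk_eventually_leaves_prefix[OF fin] unfolding eventually_sequentially by metis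
  text \<open>The threshold lies past x, since a x itself is a vertex of the prefix.\<close>
  have leave_gt: "x < leave x" for x
    using leave[of x x] by (cases "x < leave x") auto
  have "\<exists>i j. e \<le> i \<and> i \<le> j \<and> a i \<in> A \<and> a j \<in> B" for e
  proof -
    obtain i where "i \<ge> e" "a i \<in> A" using A unfolding frequently_sequentially by blast
    moreover obtain j where "j \<ge> i" "a j \<in> B" using B unfolding frequently_sequentially by blast
    ultimately show ?thesis by blast
  qed
  then obtain start stop :: "nat \<Rightarrow> nat" where window: "\<And>e. e \<le> start e"
    "\<And>e. start e \<le> stop e" "\<And>e. a (start e) \<in> A" "\<And>e. a (stop e) \<in> B"
    by metis
  text \<open>The n-th window begins at the threshold e n, the next threshold lies past its end.\<close>
  define e where "e = rec_nat 0 (\<lambda>_ x. leave (stop x))"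
  define I where "I n = start (e n)" for n
  define J where "J n = stop (e n)" for n
  have next_window: "I (Suc n) \<ge> leave (J n)" for n
    using window(1) by (simp add: I_def J_def e_def)
  have "J n < J (Suc n)" for n
    using next_window[of n] leave_gt[of "J n"] window(2)[of "e (Suc n)"] by (simp add: I_def J_def)
  then have J_mono: "mono J" by (simp add: mono_iff_le_Suc less_imp_le)
  have disjoint: "a ` {I m..J m} \<inter> a ` {I n..J n} = {}" if "m < n" for m n
  proof -
    obtain n' where n': "n = Suc n'" using \<open>m < n\<close> by (cases n) auto
    have "a ` {I m..J m} \<subseteq> a ` {..J n'}"
      using \<open>m < n\<close> n' monoD[OF J_mono, of m n'] by auto
    moreover have "a ` {I n..J n} \<inter> a ` {..J n'} = {}"
    proof -
      have "a k \<notin> a ` {..J n'}" if "I n \<le> k" for k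
        using that next_window[of n'] n' leave[of "J n'" k] by simp
      then show ?thesis by fastforce
    qed
    ultimately show ?thesis by blast
  qed
  show thesis
  proof
    show "I n \<le> J n" "a (I n) \<in> A" "a (J n) \<in> B" for n
      using window by (simp_all add: I_def J_def)
    show "a ` {I m..J m} \<inter> a ` {I n..J n} = {}" if "m \<noteq> n" for m n
      using that disjoint[of m n] disjoint[of n m] by (metis Int_commute linorder_neq_iff)
  qed
qed

section \<open>Infinitely many disjoint paths\<close>

lemma reach_preceqI:
  fixes P :: "nat \<Rightarrow> 'a list"
  assumes path: "\<And>n. is_path \<Gamma> (P n)" "\<And>n. hd (P n) \<in> A" "\<And>n. last (P n) \<in> B"
    and disjoint: "\<And>m n. m \<noteq> n \<Longrightarrow> set (P m) \<inter> set (P n) = {}"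
  shows "reach_preceq \<Gamma> A B"
  unfolding reach_preceq_def
proof (intro exI[of _ "range P"] conjI)
  have "P m \<noteq> P n" if "m \<noteq> n" for m n
    using disjoint[OF that] path(1)[of n] by (auto simp: is_path_def)
  then have "inj P" by (rule linorder_injI) simp
  then show "infinite (range P)" by (simp add: finite_image_iff)
  show "\<forall>p\<in>range P. is_path \<Gamma> p \<and> hd p \<in> A \<and> last p \<in> B" using path by auto
  show "pairwise (\<lambda>p q. set p \<inter> set q = {}) (range P)"
    by (rule pairwise_imageI) (use disjoint in auto)
qed

lemma walk_reach_preceq:
  fixes a :: "nat \<Rightarrow> 'a"
  assumes walk: "is_walk \<Gamma> a" and fin: "\<forall>v. finite {i. a i = v}"
    and A: "\<exists>\<^sub>F i in sequentially. a i \<in> A" and B: "\<exists>\<^sub>F j in sequentially. a j \<in> B"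
  shows "reach_preceq \<Gamma> A B"
proof -
  obtain I J :: "nat \<Rightarrow> nat" where window: "\<And>n. I n \<le> J n" "\<And>n. a (I n) \<in> A"
    "\<And>n. a (J n) \<in> B"
    and disjoint: "\<And>m n. m \<noteq> n \<Longrightarrow> a ` {I m..J m} \<inter> a ` {I n..J n} = {}"
    using walk_disjoint_windows[OF fin A B] by blast
  obtain P where P: "\<And>n. is_path \<Gamma> (P n)" "\<And>n. hd (P n) = a (I n)"
    "\<And>n. last (P n) = a (J n)" "\<And>n. set (P n) \<subseteq> a ` {I n..J n}"
    using walk_segment_path[OF walk window(1)] by metis
  show ?thesis
  proof (rule reach_preceqI)
    show "is_path \<Gamma> (P n)" "hd (P n) \<in> A" "last (P n) \<in> B" for n
      using P window by simp_all
    show "set (P m) \<inter> set (P n) = {}" if "m \<noteq> n" for m n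
      using disjoint[OF that] P(4)[of m] P(4)[of n] by blast
  qed
qed

section \<open>Extracting a ray\<close>

text \<open>A walk with finitely many repetitions contains a ray as a subsequence: repeatedly jump
  to the last occurrence of the current vertex and step forward.\<close>

lemma walk_contains_ray:
  fixes a :: "nat \<Rightarrow> 'a"
  assumes walk: "is_walk \<Gamma> a" and fin: "\<forall>v. finite {i. a i = v}"
  obtains f where "strict_mono f" and "is_ray \<Gamma> (a \<circ> f)"
proof -
  define last_occ where "last_occ i = Max {j. a j = a i}" for i
  have last_occ: "i \<le> last_occ i" "a (last_occ i) = a i" for i
    using Max_ge[of "{j. a j = a i}" i] Max_in[of "{j. a j = a i}"] fin
    by (auto simp: last_occ_def)
  have after_last_occ: "a j \<noteq> a i" if "last_occ i < j" for i j
  proof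
    assume "a j = a i"
    then have "j \<le> last_occ i" unfolding last_occ_def using fin by (intro Max_ge) auto
    with that show False by simp
  qed
  define f where "f = rec_nat (last_occ 0) (\<lambda>_ x. last_occ (Suc x))"
  have f_Suc: "f (Suc k) = last_occ (Suc (f k))" for k by (simp add: f_def)
  have f_last_occ: "\<exists>x. f k = last_occ x" for k by (cases k) (auto simp: f_def)
  have mono: "strict_mono f"
    unfolding strict_mono_Suc_iff using last_occ(1) by (simp add: f_Suc Suc_le_lessD)
  have "is_walk \<Gamma> (a \<circ> f)"
    using walk by (simp add: is_walk_def f_Suc last_occ(2))
  moreover have "inj (a \<circ> f)"
  proof (rule linorder_injI)
    fix m n :: nat assume "m < n"
    then have "f m < f n" using mono by (simp add: strict_mono_less)
    moreover obtain x where "f m = last_occ x" using f_last_occ by blast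
    ultimately show "(a \<circ> f) m \<noteq> (a \<circ> f) n"
      using after_last_occ[of x "f n"] last_occ(2)[of x] by auto
  qed
  ultimately show thesis using that mono by (simp add: is_ray_def)
qed

theorem walk_ray_linked:
  fixes a :: "nat \<Rightarrow> 'a"
  assumes walk: "is_walk \<Gamma> a" and fin: "\<forall>v. finite {i. a i = v}"
  shows "\<exists>f r. strict_mono f \<and> r = a \<circ> f \<and> is_ray \<Gamma> r \<and>
           (\<forall>\<Sigma>. \<Sigma> \<subseteq> range a \<and> infinite \<Sigma> \<longrightarrow>
              reach_preceq \<Gamma> (range r) \<Sigma> \<and> reach_preceq \<Gamma> \<Sigma> (range r))"
proof -
  obtain f where f: "strict_mono f" "is_ray \<Gamma> (a \<circ> f)"
    using walk_contains_ray[OF walk fin] by blast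
  text \<open>The ray is visited at every index f N \<ge> N.\<close>
  have ray_frequent: "\<exists>\<^sub>F i in sequentially. a i \<in> range (a \<circ> f)"
    unfolding frequently_sequentially
    using strict_mono_imp_increasing[OF f(1)] by (metis comp_apply rangeI)
  have "reach_preceq \<Gamma> (range (a \<circ> f)) \<Sigma> \<and> reach_preceq \<Gamma> \<Sigma> (range (a \<circ> f))"
    if "\<Sigma> \<subseteq> range a" "infinite \<Sigma>" for \<Sigma>
    using frequently_visits_infinite_subset[OF that] ray_frequent
    by (blast intro: walk_reach_preceq[OF walk fin])
  then show ?thesis using f by blast
qed

section \<open>Reversing the digraph\<close>

lemma is_anti_walk_iff_converse: "is_anti_walk \<Gamma> a \<longleftrightarrow> is_walk (converse \<Gamma>) a"
  by (simp add: is_walk_def is_anti_walk_def)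

lemma is_path_converse_rev:
  assumes "is_path (converse \<Gamma>) p"
  shows "is_path \<Gamma> (rev p)"
  unfolding is_path_def
proof (intro conjI allI impI)
  show "rev p \<noteq> []" "distinct (rev p)" using assms by (auto simp: is_path_def)
  fix i assume i: "Suc i < length (rev p)"
  define k where "k = length p - Suc (Suc i)"
  have "Suc k < length p" "length p - Suc i = Suc k" using i by (auto simp: k_def)
  then have "(p ! k, p ! Suc k) \<in> converse \<Gamma>" using assms by (simp add: is_path_def)
  then show "(rev p ! i, rev p ! Suc i) \<in> \<Gamma>"
    using i \<open>length p - Suc i = Suc k\<close> by (simp add: rev_nth k_def)
qed

lemma reach_preceq_converse:
  assumes "reach_preceq (converse \<Gamma>) X Y"
  shows "reach_preceq \<Gamma> Y X"
proof -
  obtain P where P: "infinite P" "\<forall>p\<in>P. is_path (converse \<Gamma>) p \<and> hd p \<in> X \<and> last p \<in> Y"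
    "pairwise (\<lambda>p q. set p \<inter> set q = {}) P"
    using assms unfolding reach_preceq_def by blast
  have "p \<noteq> []" if "p \<in> P" for p using that P(2) by (auto simp: is_path_def)
  then have "\<forall>p\<in>rev ` P. is_path \<Gamma> p \<and> hd p \<in> Y \<and> last p \<in> X"
    using P(2) is_path_converse_rev by (auto simp: hd_rev last_rev)
  moreover have "infinite (rev ` P)" using P(1) finite_imageD[of rev P] inj_on_rev by blast
  moreover have "pairwise (\<lambda>p q. set p \<inter> set q = {}) (rev ` P)"
    using P(3) by (auto simp: pairwise_def)
  ultimately show ?thesis unfolding reach_preceq_def by blast
qed

theorem anti_walk_anti_ray_linked:
  fixes a :: "nat \<Rightarrow> 'a"
  assumes anti_walk: "is_anti_walk \<Gamma> a" and fin: "\<forall>v. finite {i. a i = v}"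
  shows "\<exists>f r. strict_mono f \<and> r = a \<circ> f \<and> is_anti_ray \<Gamma> r \<and>
           (\<forall>\<Sigma>. \<Sigma> \<subseteq> range a \<and> infinite \<Sigma> \<longrightarrow>
              reach_preceq \<Gamma> (range r) \<Sigma> \<and> reach_preceq \<Gamma> \<Sigma> (range r))"
proof -
  have walk: "is_walk (converse \<Gamma>) a" using anti_walk by (simp add: is_anti_walk_iff_converse)
  obtain f r where f: "strict_mono f" "r = a \<circ> f" "is_ray (converse \<Gamma>) r"
    and linked: "\<And>\<Sigma>. \<Sigma> \<subseteq> range a \<Longrightarrow> infinite \<Sigma> \<Longrightarrow>
      reach_preceq (converse \<Gamma>) (range r) \<Sigma> \<and> reach_preceq (converse \<Gamma>) \<Sigma> (range r)"
    using walk_ray_linked[OF walk fin] by auto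
  have "is_anti_ray \<Gamma> r"
    using f(3) by (simp add: is_anti_ray_def is_ray_def is_anti_walk_iff_converse)
  moreover have "reach_preceq \<Gamma> (range r) \<Sigma> \<and> reach_preceq \<Gamma> \<Sigma> (range r)"
    if "\<Sigma> \<subseteq> range a" "infinite \<Sigma>" for \<Sigma>
    using linked[OF that] by (meson reach_preceq_converse)
  ultimately show ?thesis using f(1,2) by blast
qed

text \<open>The two halves are the walk and anti-walk theorems.\<close>

theorem mainTheorem1:
  fixes \<Gamma> :: "('a \<times> 'a) set" and \<Omega> :: "'a set"
  assumes "\<Gamma> \<subseteq> \<Omega> \<times> \<Omega>"
  shows "(\<forall>a :: nat \<Rightarrow> 'a. is_walk \<Gamma> a \<and> (\<forall>v. finite {i. a i = v}) \<longrightarrow>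
            (\<exists>f r. strict_mono f \<and> r = a \<circ> f \<and> is_ray \<Gamma> r \<and>
               (\<forall>\<Sigma>. \<Sigma> \<subseteq> range a \<and> infinite \<Sigma> \<longrightarrow>
                  reach_preceq \<Gamma> (range r) \<Sigma> \<and> reach_preceq \<Gamma> \<Sigma> (range r))))
       \<and> (\<forall>a :: nat \<Rightarrow> 'a. is_anti_walk \<Gamma> a \<and> (\<forall>v. finite {i. a i = v}) \<longrightarrow>
            (\<exists>f r. strict_mono f \<and> r = a \<circ> f \<and> is_anti_ray \<Gamma> r \<and>
               (\<forall>\<Sigma>. \<Sigma> \<subseteq> range a \<and> infinite \<Sigma> \<longrightarrow>
                  reach_preceq \<Gamma> (range r) \<Sigma> \<and> reach_preceq \<Gamma> \<Sigma> (range r))))"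
  by (intro conjI allI impI; elim conjE; rule walk_ray_linked anti_walk_anti_ray_linked)

end
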